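(* Let $G$ be a connected undirected weighted graph on $n$ nodes (weights normalized as below) with maximum weighted degree $d_{\max}<\frac{n^{1/5}}{16\ln n}$. Then, for all sufficiently large $n$, $\mathsf{OPT}(G)>\frac{1}{8\,d_{\max}}$.
   Context: Weighted modularity: $G=(V,E,\ell)$ is an undirected graph with nonnegative edge weights $\ell$; $a_{u,v}=\ell(u,v)$ if $\{u,v\}\in E$ and $0$ otherwise; $d_u=\sum_{v}a_{u,v}$ is the weighted degree, $d_{\max}=\max_v d_v$. Weights are normalized (by a common scaling, which does not change modularity) so that $\sum_{v\in V}d_v=2|E|$, and $m=\frac12\sum_v d_v$. For $C\subseteq V$, $\mathsf M(C)=\frac{1}{2m}\sum_{u\in C}\sum_{v\in C}\big(a_{u,v}-\frac{d_ud_v}{2m}\big)$, the sum over all ordered pairs including $u=v$. A clustering is a partition $\mathcal S$ of $V$ into nonempty clusters, $\mathsf M(\mathcal S)=\sum_{C\in\mathcal S}\mathsf M(C)$, and $\mathsf{OPT}(G)$ is the maximum of $\mathsf M(\mathcal S)$ over all clusterings. *)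

theory Defs
  imports Complex_Main "HOL-Library.Disjoint_Sets"
begin

definition wgraph :: "'a set \<Rightarrow> 'a set set \<Rightarrow> ('a set \<Rightarrow> real) \<Rightarrow> bool" where
  "wgraph V E ell \<longleftrightarrow> finite V \<and>
     (\<forall>e\<in>E. \<exists>u v. u \<in> V \<and> v \<in> V \<and> u \<noteq> v \<and> e = {u, v}) \<and>
     (\<forall>e\<in>E. ell e \<ge> 0)"

definition connected_graph :: "'a set \<Rightarrow> 'a set set \<Rightarrow> bool" where
  "connected_graph V E \<longleftrightarrow>
     (\<forall>u\<in>V. \<forall>v\<in>V. (u, v) \<in> {(x, y). {x, y} \<in> E}\<^sup>*)"

definition adj :: "'a set set \<Rightarrow> ('a set \<Rightarrow> real) \<Rightarrow> 'a \<Rightarrow> 'a \<Rightarrow> real" where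
  "adj E ell u v = (if {u, v} \<in> E then ell {u, v} else 0)"

definition wdeg :: "'a set \<Rightarrow> 'a set set \<Rightarrow> ('a set \<Rightarrow> real) \<Rightarrow> 'a \<Rightarrow> real" where
  "wdeg V E ell u = (\<Sum>v\<in>V. adj E ell u v)"

definition dmax :: "'a set \<Rightarrow> 'a set set \<Rightarrow> ('a set \<Rightarrow> real) \<Rightarrow> real" where
  "dmax V E ell = Max (wdeg V E ell ` V)"

definition normalized :: "'a set \<Rightarrow> 'a set set \<Rightarrow> ('a set \<Rightarrow> real) \<Rightarrow> bool" where
  "normalized V E ell \<longleftrightarrow> (\<Sum>v\<in>V. wdeg V E ell v) = 2 * real (card E)"

definition mtot :: "'a set \<Rightarrow> 'a set set \<Rightarrow> ('a set \<Rightarrow> real) \<Rightarrow> real" where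
  "mtot V E ell = (\<Sum>v\<in>V. wdeg V E ell v) / 2"

definition modC :: "'a set \<Rightarrow> 'a set set \<Rightarrow> ('a set \<Rightarrow> real) \<Rightarrow> 'a set \<Rightarrow> real" where
  "modC V E ell C = 1 / (2 * mtot V E ell) *
     (\<Sum>u\<in>C. \<Sum>v\<in>C. adj E ell u v -
        wdeg V E ell u * wdeg V E ell v / (2 * mtot V E ell))"

definition modularity :: "'a set \<Rightarrow> 'a set set \<Rightarrow> ('a set \<Rightarrow> real) \<Rightarrow> 'a set set \<Rightarrow> real" where
  "modularity V E ell S = (\<Sum>C\<in>S. modC V E ell C)"

definition OPT :: "'a set \<Rightarrow> 'a set set \<Rightarrow> ('a set \<Rightarrow> real) \<Rightarrow> real" where
  "OPT V E ell = Max {modularity V E ell S | S. partition_on V S}"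

end

theory Submission
  imports Defs
begin

(*
  Write K = |E| and D = d_max.  By the normalization, the total
  edge weight is K and m = K, and by connectivity every vertex lies on an
  edge, so n <= 2K.  The degree hypothesis forces 256 D^2 < n <= 2K.

  (1) Since the weights sum to K over K edges, sum_e ell(e)^2 >= K.
  (2) A greedy argument (take a heaviest edge, discard the edges meeting it,
      recurse) yields a matching M of weight W with sum_e ell(e)^2 <= 2 D W.
  (3) Clustering V into the edges of M and singletons gives modularity at
      least (2W - 2D) / (2K): each cluster carries inner weight 2 ell(e)
      and volume at most 2D, and the volume terms total at most 2D/(2m).
  Combining, 8D(W - D) >= 4K - 8D^2 > K, i.e. OPT >= (W - D)/K > 1/(8D).
*)

lemma edge_shape:
  "wgraph V E ell \<Longrightarrow> e \<in> E \<Longrightarrow> \<exists>u v. u \<in> V \<and> v \<in> V \<and> u \<noteq> v \<and> e = {u, v}"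
  unfolding wgraph_def by blast

lemma finite_vertices: "wgraph V E ell \<Longrightarrow> finite V"
  unfolding wgraph_def by blast

lemma finite_edges: "wgraph V E ell \<Longrightarrow> finite E"
proof -
  assume w: "wgraph V E ell"
  have "E \<subseteq> Pow V" using edge_shape[OF w] by blast
  then show ?thesis using finite_vertices[OF w] by (meson finite_Pow_iff rev_finite_subset)
qed

lemma weight_nonneg: "wgraph V E ell \<Longrightarrow> e \<in> E \<Longrightarrow> ell e \<ge> 0"
  unfolding wgraph_def by blast

lemma adj_nonneg: "wgraph V E ell \<Longrightarrow> adj E ell u v \<ge> 0"
  unfolding adj_def using weight_nonneg by auto

lemma wdeg_nonneg: "wgraph V E ell \<Longrightarrow> wdeg V E ell u \<ge> 0"
  unfolding wdeg_def by (simp add: adj_nonneg sum_nonneg)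

text \<open>Graphs are loopless, so the diagonal of the adjacency matrix vanishes.\<close>
lemma adj_loop: "wgraph V E ell \<Longrightarrow> adj E ell u u = 0"
proof -
  assume w: "wgraph V E ell"
  have "{u} \<notin> E" using edge_shape[OF w] by (metis doubleton_eq_iff insert_absorb2)
  then show ?thesis by (simp add: adj_def)
qed

lemma wdeg_incident:
  assumes w: "wgraph V E ell" and u: "u \<in> V"
  shows "wdeg V E ell u = (\<Sum>e\<in>{e\<in>E. u \<in> e}. ell e)"
proof -
  have "wdeg V E ell u = (\<Sum>v\<in>{v\<in>V. {u,v} \<in> E}. ell {u,v})"
    unfolding wdeg_def adj_def using finite_vertices[OF w] by (simp add: sum.inter_filter)
  also have "\<dots> = (\<Sum>e\<in>(\<lambda>v. {u,v}) ` {v\<in>V. {u,v} \<in> E}. ell e)"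
    by (rule sum.reindex[symmetric, unfolded comp_def]) (auto simp: inj_on_def doubleton_eq_iff)
  also have "(\<lambda>v. {u,v}) ` {v\<in>V. {u,v} \<in> E} = {e\<in>E. u \<in> e}"
  proof
    show "{e\<in>E. u \<in> e} \<subseteq> (\<lambda>v. {u,v}) ` {v\<in>V. {u,v} \<in> E}"
    proof
      fix e assume e: "e \<in> {e\<in>E. u \<in> e}"
      then obtain a b where ab: "a \<in> V" "b \<in> V" "e = {a,b}" using edge_shape[OF w] by blast
      then have "(u = a \<and> e = {u,b}) \<or> (u = b \<and> e = {u,a})" using e by (auto simp: insert_commute)
      then show "e \<in> (\<lambda>v. {u,v}) ` {v\<in>V. {u,v} \<in> E}" using e ab by auto
    qed
  qed auto
  finally show ?thesis .
qed

text \<open>Handshake lemma: every edge contributes its weight to exactly two degrees.\<close>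
lemma handshake:
  assumes w: "wgraph V E ell"
  shows "(\<Sum>v\<in>V. wdeg V E ell v) = 2 * (\<Sum>e\<in>E. ell e)"
proof -
  have "(\<Sum>v\<in>V. wdeg V E ell v) = (\<Sum>v\<in>V. \<Sum>e\<in>E. if v \<in> e then ell e else 0)"
    using wdeg_incident[OF w] finite_edges[OF w] by (simp add: sum.inter_filter)
  also have "\<dots> = (\<Sum>e\<in>E. \<Sum>v\<in>V. if v \<in> e then ell e else 0)"
    by (rule sum.swap)
  also have "\<dots> = (\<Sum>e\<in>E. 2 * ell e)"
  proof (rule sum.cong[OF refl])
    fix e assume "e \<in> E"
    then obtain a b where ab: "a \<in> V" "b \<in> V" "a \<noteq> b" "e = {a,b}"
      using edge_shape[OF w] by blast
    then have "V \<inter> e = {a,b}" by auto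
    then have "(\<Sum>v\<in>V. if v \<in> e then ell e else 0) = real (card {a,b}) * ell e"
      using finite_vertices[OF w] by (simp add: sum.If_cases Int_def)
    then show "(\<Sum>v\<in>V. if v \<in> e then ell e else 0) = 2 * ell e" using ab(3) by simp
  qed
  finally show ?thesis by (simp add: sum_distrib_left)
qed

text \<open>In a connected graph with at least two vertices every vertex lies on an
  edge; as each edge covers two vertices, there are at least n/2 edges.\<close>
lemma connected_card_le:
  assumes w: "wgraph V E ell" and c: "connected_graph V E" and two: "card V \<ge> 2"
  shows "card V \<le> 2 * card E"
proof -
  have fV: "finite V" using finite_vertices[OF w] .
  have cover: "V \<subseteq> \<Union>E"
  proof
    fix u assume u: "u \<in> V"
    have "card (V - {u}) \<ge> 1" using two u fV by simp
    then have "V - {u} \<noteq> {}" by (intro notI) simp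
    then obtain v where v: "v \<in> V" "v \<noteq> u" by blast
    have "(u, v) \<in> {(x, y). {x, y} \<in> E}\<^sup>*" using c u v unfolding connected_graph_def by blast
    then show "u \<in> \<Union>E" using v(2) by (cases rule: converse_rtranclE) auto
  qed
  have card2: "card e = 2" if "e \<in> E" for e
    using edge_shape[OF w that] by auto
  have "finite (\<Union>E)" using finite_edges[OF w] card2 by (metis card.infinite finite_Union zero_neq_numeral)
  then have "card V \<le> card (\<Union>E)" using cover by (rule card_mono)
  also have "\<dots> \<le> sum card E" by (rule card_Union_le_sum_card)
  also have "\<dots> = 2 * card E" using card2 by simp
  finally show ?thesis .
qed

section \<open>A heavy matching\<close>

text \<open>The edges meeting a fixed edge {a,b} are incident to a or to b, so their
  total weight is at most the sum of the two degrees.\<close>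
lemma weight_meeting_edge:
  assumes w: "wgraph V E ell" and D: "\<forall>u\<in>V. wdeg V E ell u \<le> D"
    and f: "f \<in> E" and F: "F \<subseteq> E"
  shows "(\<Sum>e\<in>{e\<in>F. e \<inter> f \<noteq> {}}. ell e) \<le> 2 * D"
proof -
  obtain a b where ab: "a \<in> V" "b \<in> V" "f = {a,b}" using edge_shape[OF w f] by blast
  define Ia where "Ia = {e\<in>E. a \<in> e}"
  define Ib where "Ib = {e\<in>E. b \<in> e}"
  have fin: "finite Ia" "finite Ib" using finite_edges[OF w] unfolding Ia_def Ib_def by auto
  have nn: "\<And>e. e \<in> E \<Longrightarrow> ell e \<ge> 0" using weight_nonneg[OF w] .
  have "(\<Sum>e\<in>{e\<in>F. e \<inter> f \<noteq> {}}. ell e) \<le> (\<Sum>e\<in>Ia \<union> Ib. ell e)"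
    using fin F ab nn unfolding Ia_def Ib_def by (intro sum_mono2) auto
  also have "\<dots> = (\<Sum>e\<in>Ia. ell e) + (\<Sum>e\<in>Ib. ell e) - (\<Sum>e\<in>Ia \<inter> Ib. ell e)"
    using fin by (rule sum_Un)
  also have "\<dots> \<le> (\<Sum>e\<in>Ia. ell e) + (\<Sum>e\<in>Ib. ell e)"
    using nn unfolding Ia_def by (auto intro!: sum_nonneg)
  also have "\<dots> \<le> 2 * D"
  proof -
    have "wdeg V E ell a \<le> D" "wdeg V E ell b \<le> D" using D ab by auto
    then show ?thesis using wdeg_incident[OF w ab(1)] wdeg_incident[OF w ab(2)]
      unfolding Ia_def Ib_def by linarith
  qed
  finally show ?thesis .
qed

text \<open>A heaviest edge f pays for the squares of
  all edges meeting it (each is at most ell(f) times its weight); recurse on the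
  edges disjoint from f.\<close>
lemma heavy_matching:
  assumes w: "wgraph V E ell" and D: "\<forall>u\<in>V. wdeg V E ell u \<le> D"
  shows "finite F \<Longrightarrow> F \<subseteq> E \<Longrightarrow>
    \<exists>M\<subseteq>F. disjoint M \<and> (\<Sum>e\<in>F. (ell e)^2) \<le> 2 * D * (\<Sum>e\<in>M. ell e)"
proof (induction F rule: finite_psubset_induct)
  case (psubset F)
  show ?case
  proof (cases "F = {}")
    case True then show ?thesis by (auto simp: disjoint_def)
  next
    case False
    have "Max (ell ` F) \<in> ell ` F" using False psubset.hyps by simp
    then obtain f where f: "f \<in> F" "ell f = Max (ell ` F)" by auto
    have heaviest: "\<And>e. e \<in> F \<Longrightarrow> ell e \<le> ell f" using f psubset.hyps by simp
    have nn: "\<And>e. e \<in> F \<Longrightarrow> ell e \<ge> 0" using weight_nonneg[OF w] psubset.prems by auto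
    have fE: "f \<in> E" using f psubset.prems by auto
    define F' where "F' = {e\<in>F. e \<inter> f = {}}"
    have "f \<inter> f \<noteq> {}" using edge_shape[OF w fE] by auto
    then have smaller: "F' \<subset> F" using f unfolding F'_def by auto
    obtain M' where M': "M' \<subseteq> F'" "disjoint M'"
      "(\<Sum>e\<in>F'. (ell e)^2) \<le> 2 * D * (\<Sum>e\<in>M'. ell e)"
      using psubset.IH[OF smaller] smaller psubset.prems by blast
    have rest: "F - F' = {e\<in>F. e \<inter> f \<noteq> {}}" unfolding F'_def by auto
    have "(\<Sum>e\<in>F - F'. (ell e)^2) \<le> (\<Sum>e\<in>F - F'. ell f * ell e)"
      using heaviest nn by (intro sum_mono) (simp add: power2_eq_square mult_right_mono)
    also have "\<dots> = ell f * (\<Sum>e\<in>F - F'. ell e)" by (simp add: sum_distrib_left)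
    also have "\<dots> \<le> ell f * (2 * D)"
      using weight_meeting_edge[OF w D fE psubset.prems] nn[OF f(1)] rest
      by (intro mult_left_mono) auto
    finally have near: "(\<Sum>e\<in>F - F'. (ell e)^2) \<le> 2 * D * ell f" by (simp add: algebra_simps)
    have "f \<notin> M'" using M'(1) \<open>f \<inter> f \<noteq> {}\<close> unfolding F'_def by auto
    moreover have "finite M'"
      using M'(1) smaller psubset.hyps by (meson finite_subset psubset_imp_subset)
    ultimately have "(\<Sum>e\<in>insert f M'. ell e) = ell f + (\<Sum>e\<in>M'. ell e)" by simp
    moreover have "(\<Sum>e\<in>F. (ell e)^2) = (\<Sum>e\<in>F - F'. (ell e)^2) + (\<Sum>e\<in>F'. (ell e)^2)"
      by (rule sum.subset_diff[OF psubset_imp_subset[OF smaller] psubset.hyps])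
    ultimately have "(\<Sum>e\<in>F. (ell e)^2) \<le> 2 * D * (\<Sum>e\<in>insert f M'. ell e)"
      using near M'(3) by (simp add: distrib_left)
    moreover have "disjoint (insert f M')"
      using M'(1,2) unfolding F'_def disjoint_def by blast
    moreover have "insert f M' \<subseteq> F" using f M'(1) smaller by auto
    ultimately show ?thesis by blast
  qed
qed

text \<open>Weights whose sum equals the number of edges have square sum at least
  that number, since sum (ell(e) - 1)^2 >= 0.\<close>
lemma sum_squares_ge_card:
  fixes ell :: "'b \<Rightarrow> real"
  assumes "(\<Sum>e\<in>E. ell e) = real (card E)"
  shows "(\<Sum>e\<in>E. (ell e)^2) \<ge> real (card E)"
proof -
  have "0 \<le> (\<Sum>e\<in>E. (ell e - 1)^2)" by (simp add: sum_nonneg)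
  also have "\<dots> = (\<Sum>e\<in>E. (ell e)^2) - 2 * (\<Sum>e\<in>E. ell e) + real (card E)"
    by (simp add: power2_diff sum.distrib sum_subtractf sum_distrib_left)
  finally show ?thesis using assms by simp
qed

section \<open>Modularity estimates\<close>

definition inner_weight :: "'a set set \<Rightarrow> ('a set \<Rightarrow> real) \<Rightarrow> 'a set \<Rightarrow> real" where
  "inner_weight E ell C = (\<Sum>x\<in>C. \<Sum>y\<in>C. adj E ell x y)"

definition vol :: "'a set \<Rightarrow> 'a set set \<Rightarrow> ('a set \<Rightarrow> real) \<Rightarrow> 'a set \<Rightarrow> real" where
  "vol V E ell C = (\<Sum>v\<in>C. wdeg V E ell v)"

lemma modC_inner_vol:
  "modC V E ell C = inner_weight E ell C / (2 * mtot V E ell)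
     - (vol V E ell C)^2 / (2 * mtot V E ell)^2"
  unfolding modC_def inner_weight_def vol_def
  by (simp add: sum_subtractf power2_eq_square sum_divide_distrib[symmetric] sum_product
      diff_divide_distrib)

lemma inner_weight_edge:
  assumes w: "wgraph V E ell" and e: "e \<in> E"
  shows "inner_weight E ell e = 2 * ell e"
proof -
  obtain a b where ab: "a \<noteq> b" "e = {a,b}" using edge_shape[OF w e] by blast
  have "adj E ell a b = ell e" "adj E ell b a = ell e" using e ab by (auto simp: adj_def insert_commute)
  then show ?thesis using ab adj_loop[OF w] unfolding inner_weight_def by simp
qed

text \<open>If every cluster of a clustering has volume at most B, the volume
  (null-model) terms cost at most B/(2m) in total, since the volumes sum to 2m.\<close>
lemma modularity_ge_volume_bound:
  assumes w: "wgraph V E ell" and S: "partition_on V S"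
    and m: "mtot V E ell > 0" and B: "\<And>C. C \<in> S \<Longrightarrow> vol V E ell C \<le> B"
  shows "modularity V E ell S \<ge>
    ((\<Sum>C\<in>S. inner_weight E ell C) - B) / (2 * mtot V E ell)"
proof -
  define m2 where "m2 = 2 * mtot V E ell"
  have fV: "finite V" using finite_vertices[OF w] .
  have "\<forall>C\<in>S. finite C" using S fV partition_onD1 by (metis Union_upper finite_subset)
  moreover have "\<forall>A\<in>S. \<forall>B\<in>S. A \<noteq> B \<longrightarrow> A \<inter> B = {}"
    using partition_onD2[OF S] unfolding disjoint_def by blast
  ultimately have "(\<Sum>C\<in>S. vol V E ell C) = (\<Sum>v\<in>\<Union>S. wdeg V E ell v)"
    unfolding vol_def by (simp add: sum.Union_disjoint comp_def)
  also have "\<dots> = m2" using S unfolding m2_def mtot_def partition_on_def by simp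
  finally have total: "(\<Sum>C\<in>S. vol V E ell C) = m2" .
  have "(\<Sum>C\<in>S. (vol V E ell C)^2) \<le> (\<Sum>C\<in>S. B * vol V E ell C)"
    using B wdeg_nonneg[OF w] unfolding vol_def
    by (intro sum_mono) (simp add: power2_eq_square mult_right_mono sum_nonneg)
  also have "\<dots> = B * m2" using total by (simp add: sum_distrib_left[symmetric])
  finally have "(\<Sum>C\<in>S. (vol V E ell C)^2) / m2^2 \<le> B / m2"
    using m unfolding m2_def by (simp add: divide_le_eq power2_eq_square field_simps)
  moreover have "modularity V E ell S = (\<Sum>C\<in>S. inner_weight E ell C) / m2
      - (\<Sum>C\<in>S. (vol V E ell C)^2) / m2^2"
    unfolding modularity_def modC_inner_vol m2_def
    by (simp add: sum_subtractf sum_divide_distrib)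
  ultimately show ?thesis unfolding m2_def by (simp add: diff_divide_distrib)
qed

definition matching_clustering :: "'a set \<Rightarrow> 'a set set \<Rightarrow> 'a set set" where
  "matching_clustering V M = M \<union> (\<lambda>v. {v}) ` (V - \<Union>M)"

lemma matching_clustering_partition:
  assumes w: "wgraph V E ell" and M: "M \<subseteq> E" "disjoint M"
  shows "partition_on V (matching_clustering V M)"
  using M edge_shape[OF w] unfolding matching_clustering_def
  by (intro partition_onI) (auto simp: disjoint_def disjnt_def, blast+)

text \<open>Clustering along a matching of weight W gives modularity at least
  (2W - 2D)/(2m): each cluster has at most two vertices, hence volume at most 2D.\<close>
lemma modularity_matching_clustering:
  assumes w: "wgraph V E ell" and M: "M \<subseteq> E" "disjoint M"
    and m: "mtot V E ell > 0" and D: "\<forall>u\<in>V. wdeg V E ell u \<le> D" "D \<ge> 0"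
  shows "modularity V E ell (matching_clustering V M) \<ge>
    (2 * (\<Sum>e\<in>M. ell e) - 2 * D) / (2 * mtot V E ell)"
proof -
  define S where "S = matching_clustering V M"
  have part: "partition_on V S" using matching_clustering_partition[OF w M] unfolding S_def .
  have small: "C \<subseteq> V \<and> card C \<le> 2" if "C \<in> S" for C
    using that edge_shape[OF w] M(1) unfolding S_def matching_clustering_def
    by (fastforce simp: card_insert_if)
  have vol_le: "vol V E ell C \<le> 2 * D" if C: "C \<in> S" for C
  proof -
    have "vol V E ell C \<le> real (card C) * D"
      using small[OF C] D(1) unfolding vol_def by (intro sum_bounded_above) auto
    also have "\<dots> \<le> 2 * D" using small[OF C] D(2) by (intro mult_right_mono) auto
    finally show ?thesis .
  qed
  have fS: "finite S" using finite_elements[OF finite_vertices[OF w] part] .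
  have "2 * (\<Sum>e\<in>M. ell e) = (\<Sum>C\<in>M. inner_weight E ell C)"
    unfolding sum_distrib_left using inner_weight_edge[OF w] M(1) by (intro sum.cong) auto
  also have "\<dots> \<le> (\<Sum>C\<in>S. inner_weight E ell C)"
    using fS adj_nonneg[OF w] unfolding S_def matching_clustering_def inner_weight_def
    by (intro sum_mono2) (auto intro: sum_nonneg)
  finally have "2 * (\<Sum>e\<in>M. ell e) - 2 * D \<le> (\<Sum>C\<in>S. inner_weight E ell C) - 2 * D" by simp
  then show ?thesis
    using modularity_ge_volume_bound[OF w part m vol_le] m unfolding S_def
    by (smt (verit) divide_right_mono)
qed

lemma OPT_ge:
  assumes "finite V" and "partition_on V S"
  shows "modularity V E ell S \<le> OPT V E ell"
  unfolding OPT_def using finitely_many_partition_on[OF assms(1)] assms(2)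
  by (intro Max_ge) auto

text \<open>The degree hypothesis implies 256 D^2 < n once n >= 3 (so that ln n >= 1).\<close>
lemma dmax_square_small:
  fixes n D :: real
  assumes n: "n \<ge> 3" and D: "0 < D" "D < n powr (1/5) / (16 * ln n)"
  shows "256 * D^2 < n"
proof -
  have "exp 1 \<le> n" using exp_le n by linarith
  then have "ln n \<ge> 1" using ln_ge_iff[of n 1] n by simp
  then have "D < n powr (1/5) / 16" using D(2) n
    by (smt (verit) divide_left_mono mult_pos_pos powr_gt_zero)
  then have "D^2 < (n powr (1/5) / 16)^2" using D(1) by (simp add: power_strict_mono)
  also have "\<dots> = n powr (2/5) / 256"
    using n by (simp add: power2_eq_square powr_add[symmetric] power_divide)
  also have "n powr (2/5) \<le> n powr 1" using n by (intro powr_mono) auto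
  finally show ?thesis using n by simp
qed

lemma main_bound:
  assumes w: "wgraph V E ell" and c: "connected_graph V E" and nz: "normalized V E ell"
    and n3: "card V \<ge> 3"
    and dm: "dmax V E ell < real (card V) powr (1/5) / (16 * ln (real (card V)))"
  shows "OPT V E ell > 1 / (8 * dmax V E ell)"
proof -
  define K where "K = real (card E)"
  define D where "D = dmax V E ell"
  have fV: "finite V" using finite_vertices[OF w] .
  have sumd: "(\<Sum>v\<in>V. wdeg V E ell v) = 2 * K" using nz unfolding normalized_def K_def .
  have m: "mtot V E ell = K" using sumd unfolding mtot_def by simp
  have weights: "(\<Sum>e\<in>E. ell e) = K" using handshake[OF w] sumd by simp
  have degD: "\<forall>u\<in>V. wdeg V E ell u \<le> D" unfolding D_def dmax_def using fV by simp
  have nK: "real (card V) \<le> 2 * K" using connected_card_le[OF w c] n3 unfolding K_def by simp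
  then have K: "K > 0" using n3 by simp
  have "2 * K \<le> real (card V) * D" using sum_bounded_above[of V _ D] degD sumd by metis
  then have Dpos: "D > 0" using K by (smt (verit) mult_nonneg_nonpos of_nat_0_le_iff)
  have D2: "256 * D^2 < 2 * K"
    using dmax_square_small[of "real (card V)" D] n3 Dpos dm nK unfolding D_def by simp
  obtain M where M: "M \<subseteq> E" "disjoint M"
    "(\<Sum>e\<in>E. (ell e)^2) \<le> 2 * D * (\<Sum>e\<in>M. ell e)"
    using heavy_matching[OF w degD finite_edges[OF w]] by blast
  define W where "W = (\<Sum>e\<in>M. ell e)"
  have WK: "K \<le> 2 * D * W"
    using sum_squares_ge_card[of ell E] weights M(3) unfolding K_def W_def by simp
  have "1 / (8 * D) < (W - D) / K"
    using WK D2 K Dpos by (simp add: field_simps power2_eq_square)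
  also have "\<dots> \<le> modularity V E ell (matching_clustering V M)"
    using modularity_matching_clustering[OF w M(1,2) _ degD] m K Dpos unfolding W_def
    by (simp add: field_simps)
  also have "\<dots> \<le> OPT V E ell"
    by (rule OPT_ge[OF fV matching_clustering_partition[OF w M(1,2)]])
  finally show ?thesis unfolding D_def .
qed

theorem lemma11:
  shows "\<exists>N::nat. \<forall>(V::nat set) E ell.
     wgraph V E ell \<and> connected_graph V E \<and> normalized V E ell \<and>
     card V \<ge> N \<and>
     dmax V E ell < real (card V) powr (1/5) / (16 * ln (real (card V)))
     \<longrightarrow> OPT V E ell > 1 / (8 * dmax V E ell)"
  using main_bound by (intro exI[of _ 3]) blast

end
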